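(* Let $\mathscr{D}$ be a commutative variety, $L:X^{\circledast}\to Y$ a language, and $l,r:E\to X^{\circledast}$ its syntactic congruence. Let $e_L:X^{\circledast}\twoheadrightarrow \mathrm{Syn}(L)$ be the coequalizer of $l,r$ in $\mathbf{Mon}(\mathscr{D})$ (i.e. the quotient $X^{\circledast}/E$). Then there is a unique morphism $f_L:\mathrm{Syn}(L)\to Y$ in $\mathscr{D}$ with $L=f_L\cdot e_L$, and $(\mathrm{Syn}(L),e_L,f_L)$ is the syntactic $\mathscr{D}$-monoid of $L$: $e_L$ recognizes $L$ via $f_L$, and for every surjective $\mathscr{D}$-monoid morphism $e:X^{\circledast}\twoheadrightarrow M$ and morphism $f:M\to Y$ with $L=f\cdot e$ there is a (unique, surjective) $\mathscr{D}$-monoid morphism $h:M\to\mathrm{Syn}(L)$ with $e_L=h\cdot e$ (and then $f=f_L\cdot h$).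
   Context: A commutative variety $\mathscr{D}$ is a variety of finitary algebras in which for all $A,B$ the hom-set $\mathscr{D}(A,B)$ is a subalgebra $[A,B]$ of $B^{|A|}$; it has tensor products representing bimorphisms (maps homomorphic in each variable) and is symmetric monoidal closed. A $\mathscr{D}$-monoid is an algebra $M$ of $\mathscr{D}$ with a monoid structure $(|M|,\bullet,i)$ whose multiplication is a bimorphism; $\mathbf{Mon}(\mathscr{D})$ is the category of $\mathscr{D}$-monoids and homomorphisms that are both $\mathscr{D}$-morphisms and monoid morphisms. $X^{\circledast}$ is the free $\mathscr{D}$-monoid on a fixed object $X$; $Y$ is a fixed object. A language is a morphism $L:X^{\circledast}\to Y$. A $\mathscr{D}$-monoid morphism $e:X^{\circledast}\to M$ recognizes $L$ via $f:M\to Y$ if $L=f\cdot e$. The syntactic congruence of $L$ is $E=\{(u,v)\in|X^{\circledast}|^2\mid\forall x,y:\ L(x\bullet u\bullet y)=L(x\bullet v\bullet y)\}$, with projections $l,r:E\to X^{\circledast}$. The syntactic $\mathscr{D}$-monoid is the smallest $X$-generated $\mathscr{D}$-monoid (surjective $\mathscr{D}$-monoid morphism out of $X^{\circledast}$, ordered by factorization) recognizing $L$. *)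

theory Defs
  imports Main
begin

text \<open>A signature is given by a type 'o of operation symbols and an arity map
  ar :: 'o => nat. An algebra is a carrier set with an interpretation of the
  operation symbols on lists of arguments.\<close>

record ('o, 'a) alg =
  car :: "'a set"
  ops :: "'o \<Rightarrow> 'a list \<Rightarrow> 'a"

record ('o, 'a) dmon = "('o, 'a) alg" +
  mul :: "'a \<Rightarrow> 'a \<Rightarrow> 'a"
  one :: "'a"

datatype 'o trm = Var nat | Op 'o "'o trm list"

fun eval_trm :: "('o \<Rightarrow> 'a list \<Rightarrow> 'a) \<Rightarrow> (nat \<Rightarrow> 'a) \<Rightarrow> 'o trm \<Rightarrow> 'a" where
  "eval_trm f \<rho> (Var n) = \<rho> n"
| "eval_trm f \<rho> (Op c ts) = f c (map (eval_trm f \<rho>) ts)"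

fun wf_trm :: "('o \<Rightarrow> nat) \<Rightarrow> 'o trm \<Rightarrow> bool" where
  "wf_trm ar (Var n) = True"
| "wf_trm ar (Op c ts) = (length ts = ar c \<and> list_all (wf_trm ar) ts)"

text \<open>A variety is presented by a set of (well-formed) equations.\<close>
definition variety :: "('o \<Rightarrow> nat) \<Rightarrow> ('o trm \<times> 'o trm) set \<Rightarrow> bool" where
  "variety ar Eqs \<longleftrightarrow> (\<forall>(s,t)\<in>Eqs. wf_trm ar s \<and> wf_trm ar t)"

definition closed_alg :: "('o \<Rightarrow> nat) \<Rightarrow> ('o, 'a, 'z) alg_scheme \<Rightarrow> bool" where
  "closed_alg ar A \<longleftrightarrow>
     (\<forall>c xs. length xs = ar c \<and> set xs \<subseteq> car A \<longrightarrow> ops A c xs \<in> car A)"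

definition in_var :: "('o \<Rightarrow> nat) \<Rightarrow> ('o trm \<times> 'o trm) set \<Rightarrow> ('o, 'a, 'z) alg_scheme \<Rightarrow> bool" where
  "in_var ar Eqs A \<longleftrightarrow> closed_alg ar A \<and>
     (\<forall>(s,t)\<in>Eqs. \<forall>\<rho>. (\<forall>n. \<rho> n \<in> car A) \<longrightarrow> eval_trm (ops A) \<rho> s = eval_trm (ops A) \<rho> t)"

definition hom :: "('o \<Rightarrow> nat) \<Rightarrow> ('o, 'a, 'z) alg_scheme \<Rightarrow> ('o, 'b, 'w) alg_scheme \<Rightarrow> ('a \<Rightarrow> 'b) \<Rightarrow> bool" where
  "hom ar A B h \<longleftrightarrow> (\<forall>x\<in>car A. h x \<in> car B) \<and>
     (\<forall>c xs. length xs = ar c \<and> set xs \<subseteq> car A \<longrightarrow> h (ops A c xs) = ops B c (map h xs))"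

text \<open>The hom-set D(A,B) is a subalgebra of the power B^|A|: closed under the
  pointwise operations.\<close>
definition homs_subalg :: "('o \<Rightarrow> nat) \<Rightarrow> ('o, 'a, 'z) alg_scheme \<Rightarrow> ('o, 'b, 'w) alg_scheme \<Rightarrow> bool" where
  "homs_subalg ar A B \<longleftrightarrow>
     (\<forall>c hs. length hs = ar c \<and> (\<forall>h\<in>set hs. hom ar A B h) \<longrightarrow>
        hom ar A B (\<lambda>x. ops B c (map (\<lambda>h. h x) hs)))"

text \<open>Commutativity of the variety, for algebras whose carriers live in the types 'u, 'v.\<close>
definition comm_variety :: "('o \<Rightarrow> nat) \<Rightarrow> ('o trm \<times> 'o trm) set \<Rightarrow> 'u itself \<Rightarrow> 'v itself \<Rightarrow> bool" where
  "comm_variety ar Eqs TU TV \<longleftrightarrow> variety ar Eqs \<and>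
     (\<forall>(A::('o,'u) alg) (B::('o,'v) alg). in_var ar Eqs A \<and> in_var ar Eqs B \<longrightarrow> homs_subalg ar A B)"

text \<open>D-monoids: algebras of D with a monoid structure whose multiplication is a bimorphism.\<close>
definition is_dmon :: "('o \<Rightarrow> nat) \<Rightarrow> ('o trm \<times> 'o trm) set \<Rightarrow> ('o, 'a, 'z) dmon_scheme \<Rightarrow> bool" where
  "is_dmon ar Eqs M \<longleftrightarrow> in_var ar Eqs M \<and> one M \<in> car M \<and>
     (\<forall>x\<in>car M. \<forall>y\<in>car M. mul M x y \<in> car M) \<and>
     (\<forall>x\<in>car M. \<forall>y\<in>car M. \<forall>z\<in>car M. mul M (mul M x y) z = mul M x (mul M y z)) \<and>
     (\<forall>x\<in>car M. mul M (one M) x = x \<and> mul M x (one M) = x) \<and>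
     (\<forall>a\<in>car M. hom ar M M (mul M a) \<and> hom ar M M (\<lambda>b. mul M b a))"

definition dmon_hom :: "('o \<Rightarrow> nat) \<Rightarrow> ('o, 'a, 'z) dmon_scheme \<Rightarrow> ('o, 'b, 'w) dmon_scheme \<Rightarrow> ('a \<Rightarrow> 'b) \<Rightarrow> bool" where
  "dmon_hom ar M N h \<longleftrightarrow> hom ar M N h \<and> h (one M) = one N \<and>
     (\<forall>x\<in>car M. \<forall>y\<in>car M. h (mul M x y) = mul N (h x) (h y))"

text \<open>F (with unit eta : X -> F) is the free D-monoid on X, universal property
  with respect to D-monoids carried by the type 'm.\<close>
definition free_dmon :: "('o \<Rightarrow> nat) \<Rightarrow> ('o trm \<times> 'o trm) set \<Rightarrow> ('o, 'x) alg \<Rightarrow> ('o, 'a) dmon \<Rightarrow> ('x \<Rightarrow> 'a) \<Rightarrow> 'm itself \<Rightarrow> bool" where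
  "free_dmon ar Eqs X F \<eta> TM \<longleftrightarrow> in_var ar Eqs X \<and> is_dmon ar Eqs F \<and> hom ar X F \<eta> \<and>
     (\<forall>(M::('o,'m) dmon) g. is_dmon ar Eqs M \<and> hom ar X M g \<longrightarrow>
        (\<exists>g'. dmon_hom ar F M g' \<and> (\<forall>x\<in>car X. g' (\<eta> x) = g x) \<and>
           (\<forall>g''. dmon_hom ar F M g'' \<and> (\<forall>x\<in>car X. g'' (\<eta> x) = g x) \<longrightarrow>
              (\<forall>u\<in>car F. g'' u = g' u))))"

definition syn_cong :: "('o, 'a) dmon \<Rightarrow> ('a \<Rightarrow> 'y) \<Rightarrow> ('a \<times> 'a) set" where
  "syn_cong F L = {(u,v). u \<in> car F \<and> v \<in> car F \<and>
     (\<forall>x\<in>car F. \<forall>y\<in>car F. L (mul F x (mul F u y)) = L (mul F x (mul F v y)))}"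

definition rep_cls :: "'a set \<Rightarrow> 'a" where
  "rep_cls C = (SOME u. u \<in> C)"

text \<open>The quotient X^* / E, i.e. the coequalizer of the projections l, r : E -> X^*.\<close>
definition syn_mon :: "('o, 'a) dmon \<Rightarrow> ('a \<Rightarrow> 'y) \<Rightarrow> ('o, 'a set) dmon" where
  "syn_mon F L = (let E = syn_cong F L in
     \<lparr> car = car F // E,
       ops = (\<lambda>c Cs. E `` {ops F c (map rep_cls Cs)}),
       mul = (\<lambda>C D. E `` {mul F (rep_cls C) (rep_cls D)}),
       one = E `` {one F} \<rparr>)"

definition syn_map :: "('o, 'a) dmon \<Rightarrow> ('a \<Rightarrow> 'y) \<Rightarrow> 'a \<Rightarrow> 'a set" where
  "syn_map F L u = syn_cong F L `` {u}"

end

theory Submission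
  imports Defs
begin

text \<open>
  The syntactic congruence E of L is a congruence of the D-monoid X\<circledast>: it is an equivalence,
  it is compatible with multiplication because it quantifies over all two-sided contexts, and it
  is compatible with the operations of D because, multiplication being a bimorphism, each context
  map u \<mapsto> L(x \<bullet> u \<bullet> y) is a morphism of D. Hence X\<circledast>/E, a homomorphic image of
  X\<circledast>, is a D-monoid, and the quotient map is the coequalizer of l and r.
  Choosing x = y = i shows that E is contained in the kernel of L, so L factors through the
  quotient. Conversely, if e recognizes L via f, then e u = e v gives
  L(x \<bullet> u \<bullet> y) = f(e x \<bullet> e u \<bullet> e y) = L(x \<bullet> v \<bullet> y), so the kernel of e is
  contained in E and the quotient map factors through every surjective recognizer.
\<close>

lemma
  assumes "is_dmon ar Eqs M"
  shows dmon_closed_alg: "closed_alg ar M"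
    and dmon_one_closed: "one M \<in> car M"
    and dmon_mul_closed: "x \<in> car M \<Longrightarrow> y \<in> car M \<Longrightarrow> mul M x y \<in> car M"
    and dmon_mul_assoc: "x \<in> car M \<Longrightarrow> y \<in> car M \<Longrightarrow> z \<in> car M \<Longrightarrow>
                           mul M (mul M x y) z = mul M x (mul M y z)"
    and dmon_one_mul: "x \<in> car M \<Longrightarrow> mul M (one M) x = x"
    and dmon_mul_one: "x \<in> car M \<Longrightarrow> mul M x (one M) = x"
    and dmon_hom_mul_left: "x \<in> car M \<Longrightarrow> hom ar M M (mul M x)"
    and dmon_hom_mul_right: "x \<in> car M \<Longrightarrow> hom ar M M (\<lambda>y. mul M y x)"
  using assms unfolding is_dmon_def in_var_def by blast+

section \<open>Homomorphic images\<close>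

lemma eval_trm_closed:
  assumes "closed_alg ar A" "wf_trm ar t" "\<forall>n. \<rho> n \<in> car A"
  shows "eval_trm (ops A) \<rho> t \<in> car A"
  using assms(2)
proof (induction t)
  case (Op c ts)
  then have "set (map (eval_trm (ops A) \<rho>) ts) \<subseteq> car A" "length ts = ar c"
    by (auto simp: list_all_iff)
  then show ?case
    using assms(1) unfolding closed_alg_def by simp
qed (use assms(3) in simp)

lemma hom_eval_trm:
  assumes "closed_alg ar A" "hom ar A B h" "wf_trm ar t" "\<forall>n. \<rho> n \<in> car A"
  shows "h (eval_trm (ops A) \<rho> t) = eval_trm (ops B) (\<lambda>n. h (\<rho> n)) t"
  using assms(3)
proof (induction t)
  case (Op c ts)
  then have "length ts = ar c" "set (map (eval_trm (ops A) \<rho>) ts) \<subseteq> car A"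
    using eval_trm_closed[OF assms(1) _ assms(4)] by (auto simp: list_all_iff)
  then have "h (eval_trm (ops A) \<rho> (Op c ts)) = ops B c (map h (map (eval_trm (ops A) \<rho>) ts))"
    using assms(2) unfolding hom_def by simp
  also have "map h (map (eval_trm (ops A) \<rho>) ts) = map (eval_trm (ops B) (\<lambda>n. h (\<rho> n))) ts"
    using Op by (auto simp: list_all_iff)
  finally show ?case by simp
qed simp

lemma map_inv_into:
  assumes "set xs \<subseteq> h ` A"
  shows "set (map (inv_into A h) xs) \<subseteq> A" "map h (map (inv_into A h) xs) = xs"
  using assms by (auto simp: inv_into_into f_inv_into_f intro!: map_idI)

lemma in_var_hom_image:
  assumes var: "variety ar Eqs" and A: "in_var ar Eqs A"
    and h: "hom ar A B h" "h ` car A = car B"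
  shows "in_var ar Eqs B"
  unfolding in_var_def closed_alg_def
proof (intro conjI allI impI ballI; clarify)
  fix c xs assume xs: "length xs = ar c" "set xs \<subseteq> car B"
  define us where "us = map (inv_into (car A) h) xs"
  have us: "set us \<subseteq> car A" "map h us = xs"
    using map_inv_into[of xs h "car A"] xs h(2) unfolding us_def by auto
  then have "ops B c xs = h (ops A c us)"
    using h(1) xs unfolding hom_def by auto
  then show "ops B c xs \<in> car B"
    using A h(1) us xs unfolding in_var_def closed_alg_def hom_def by auto
next
  fix s t and \<rho> :: "nat \<Rightarrow> _" assume st: "(s, t) \<in> Eqs" and \<rho>: "\<forall>n. \<rho> n \<in> car B"
  define \<sigma> where "\<sigma> = inv_into (car A) h \<circ> \<rho>"
  have \<sigma>: "\<forall>n. \<sigma> n \<in> car A" "(\<lambda>n. h (\<sigma> n)) = \<rho>"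
    using \<rho> h(2) by (auto simp: \<sigma>_def inv_into_into f_inv_into_f)
  have wf: "wf_trm ar s" "wf_trm ar t" using var st unfolding variety_def by auto
  have cl: "closed_alg ar A" using A unfolding in_var_def by blast
  have "eval_trm (ops A) \<sigma> s = eval_trm (ops A) \<sigma> t"
    using A st \<sigma>(1) unfolding in_var_def by blast
  then show "eval_trm (ops B) \<rho> s = eval_trm (ops B) \<rho> t"
    using hom_eval_trm[OF cl h(1) _ \<sigma>(1)] wf \<sigma>(2) by metis
qed

lemma hom_comp:
  assumes f: "hom ar A B f" and g: "hom ar B C g"
  shows "hom ar A C (\<lambda>x. g (f x))"
  unfolding hom_def
proof (intro conjI allI impI ballI)
  show "g (f x) \<in> car C" if "x \<in> car A" for x
    using that f g unfolding hom_def by blast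
  fix c xs assume xs: "length xs = ar c \<and> set xs \<subseteq> car A"
  then have "set (map f xs) \<subseteq> car B" using f unfolding hom_def by auto
  then show "g (f (ops A c xs)) = ops C c (map (\<lambda>x. g (f x)) xs)"
    using xs f g unfolding hom_def by (simp add: comp_def)
qed

lemma hom_transfer_onto:
  assumes A: "closed_alg ar A" and h: "hom ar A B h" "h ` car A = car B"
    and \<phi>: "hom ar A A \<phi>" and comm: "\<And>u. u \<in> car A \<Longrightarrow> h (\<phi> u) = \<psi> (h u)"
  shows "hom ar B B \<psi>"
  unfolding hom_def
proof (intro conjI allI impI ballI)
  fix x assume "x \<in> car B"
  then obtain u where "u \<in> car A" "x = h u" using h(2) by blast
  moreover have "h (\<phi> u) \<in> car B" if "u \<in> car A" for u
    using that h(1) \<phi> unfolding hom_def by blast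
  ultimately show "\<psi> x \<in> car B" using comm by metis
next
  fix c xs assume xs: "length xs = ar c \<and> set xs \<subseteq> car B"
  define us where "us = map (inv_into (car A) h) xs"
  have us: "set us \<subseteq> car A" "map h us = xs" "length us = ar c"
    using map_inv_into[of xs h "car A"] xs h(2) unfolding us_def by auto
  have \<phi>us: "set (map \<phi> us) \<subseteq> car A" using us \<phi> unfolding hom_def by auto
  have "ops B c xs = h (ops A c us)"
    using h(1) us unfolding hom_def by simp
  then have "\<psi> (ops B c xs) = h (\<phi> (ops A c us))"
    using comm A us unfolding closed_alg_def by simp
  also have "\<dots> = h (ops A c (map \<phi> us))" using \<phi> us unfolding hom_def by simp
  also have "\<dots> = ops B c (map h (map \<phi> us))" using h(1) \<phi>us us unfolding hom_def by simp
  also have "map h (map \<phi> us) = map \<psi> xs" using comm us by (auto simp: subset_iff)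
  finally show "\<psi> (ops B c xs) = ops B c (map \<psi> xs)" .
qed

lemma is_dmon_hom_image:
  assumes var: "variety ar Eqs" and A: "is_dmon ar Eqs A"
    and h: "dmon_hom ar A B h" "h ` car A = car B"
  shows "is_dmon ar Eqs B"
proof -
  have hom: "hom ar A B h" and one: "h (one A) = one B"
    and mul: "\<And>u v. u \<in> car A \<Longrightarrow> v \<in> car A \<Longrightarrow> h (mul A u v) = mul B (h u) (h v)"
    using h(1) unfolding dmon_hom_def by auto
  note A_laws = dmon_one_closed[OF A] dmon_mul_closed[OF A] dmon_mul_assoc[OF A]
    dmon_one_mul[OF A] dmon_mul_one[OF A]
  have onto: "\<And>x. x \<in> car B \<Longrightarrow> \<exists>u\<in>car A. x = h u" using h(2) by blast
  have "\<forall>x\<in>car B. \<forall>y\<in>car B. mul B x y \<in> car B"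
  proof (intro ballI)
    fix x y assume "x \<in> car B" "y \<in> car B"
    then obtain u v where "u \<in> car A" "v \<in> car A" "x = h u" "y = h v" using onto by blast
    then show "mul B x y \<in> car B" using mul A_laws h(2) by (metis image_eqI)
  qed
  moreover have "\<forall>x\<in>car B. \<forall>y\<in>car B. \<forall>z\<in>car B. mul B (mul B x y) z = mul B x (mul B y z)"
  proof (intro ballI)
    fix x y z assume "x \<in> car B" "y \<in> car B" "z \<in> car B"
    then obtain u v w where "u \<in> car A" "v \<in> car A" "w \<in> car A" "x = h u" "y = h v" "z = h w"
      using onto by meson
    then show "mul B (mul B x y) z = mul B x (mul B y z)" by (simp add: mul[symmetric] A_laws)
  qed
  moreover have "\<forall>x\<in>car B. mul B (one B) x = x \<and> mul B x (one B) = x"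
  proof
    fix x assume "x \<in> car B"
    then obtain u where "u \<in> car A" "x = h u" using onto by blast
    then show "mul B (one B) x = x \<and> mul B x (one B) = x"
      by (simp add: one[symmetric] mul[symmetric] A_laws)
  qed
  moreover have "\<forall>a\<in>car B. hom ar B B (mul B a) \<and> hom ar B B (\<lambda>b. mul B b a)"
  proof
    fix a assume "a \<in> car B"
    then obtain a0 where a0: "a0 \<in> car A" "a = h a0" using onto by blast
    then show "hom ar B B (mul B a) \<and> hom ar B B (\<lambda>b. mul B b a)"
      using hom_transfer_onto[OF dmon_closed_alg[OF A] hom h(2)] mul
        dmon_hom_mul_left[OF A a0(1)] dmon_hom_mul_right[OF A a0(1)] by auto
  qed
  moreover have "one B \<in> car B" using one A_laws(1) hom unfolding hom_def by metis
  moreover have "in_var ar Eqs B"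
    using in_var_hom_image[OF var _ hom h(2)] A unfolding is_dmon_def by blast
  ultimately show ?thesis unfolding is_dmon_def by blast
qed

section \<open>Factorization through surjective morphisms\<close>

definition kernel :: "'a set \<Rightarrow> ('a \<Rightarrow> 'b) \<Rightarrow> ('a \<times> 'a) set" where
  "kernel A f = {(u, v). u \<in> A \<and> v \<in> A \<and> f u = f v}"

lemma factor_onto_apply:
  assumes "u \<in> A" and ker: "kernel A e \<subseteq> kernel A g"
  shows "g (inv_into A e (e u)) = g u"
proof -
  have "e u \<in> e ` A" using assms(1) by blast
  then have "(inv_into A e (e u), u) \<in> kernel A e"
    using assms(1) by (simp add: kernel_def inv_into_into f_inv_into_f)
  then show ?thesis using ker unfolding kernel_def by blast
qed

lemma eq_on_onto:
  assumes "e ` A = B" "\<And>u. u \<in> A \<Longrightarrow> k (e u) = k' (e u)" "m \<in> B"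
  shows "k m = k' m"
proof -
  from assms(3) obtain u where "u \<in> A" "m = e u" unfolding assms(1)[symmetric] by (rule imageE)
  then show ?thesis using assms(2) by simp
qed

lemma hom_factor_onto:
  assumes A: "closed_alg ar A" and e: "hom ar A B e" "e ` car A = car B" and g: "hom ar A C g"
    and ker: "kernel (car A) e \<subseteq> kernel (car A) g"
  shows "hom ar B C (\<lambda>m. g (inv_into (car A) e m))"
  unfolding hom_def
proof (intro conjI allI impI ballI)
  fix m assume "m \<in> car B"
  then have "inv_into (car A) e m \<in> car A" using e(2) by (simp add: inv_into_into)
  then show "g (inv_into (car A) e m) \<in> car C" using g unfolding hom_def by blast
next
  fix c xs assume xs: "length xs = ar c \<and> set xs \<subseteq> car B"
  define us where "us = map (inv_into (car A) e) xs"
  have us: "set us \<subseteq> car A" "map e us = xs" "length us = ar c"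
    using map_inv_into[of xs e "car A"] xs e(2) unfolding us_def by auto
  have ops_us: "ops A c us \<in> car A" using A us unfolding closed_alg_def by blast
  have "ops B c xs = e (ops A c us)"
    using e(1) us unfolding hom_def by simp
  then have "g (inv_into (car A) e (ops B c xs)) = g (ops A c us)"
    using factor_onto_apply[OF ops_us ker] by simp
  also have "\<dots> = ops C c (map g us)" using g us unfolding hom_def by blast
  finally show "g (inv_into (car A) e (ops B c xs)) = ops C c (map (\<lambda>m. g (inv_into (car A) e m)) xs)"
    by (simp add: us_def comp_def)
qed

lemma dmon_hom_factor_onto:
  assumes A: "is_dmon ar Eqs A" and e: "dmon_hom ar A B e" "e ` car A = car B"
    and g: "dmon_hom ar A C g" and ker: "kernel (car A) e \<subseteq> kernel (car A) g"
  shows "dmon_hom ar B C (\<lambda>m. g (inv_into (car A) e m))"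
proof -
  let ?k = "\<lambda>m. g (inv_into (car A) e m)"
  have e_one: "e (one A) = one B"
    and e_mul: "\<And>u v. u \<in> car A \<Longrightarrow> v \<in> car A \<Longrightarrow> e (mul A u v) = mul B (e u) (e v)"
    and g_one: "g (one A) = one C"
    and g_mul: "\<And>u v. u \<in> car A \<Longrightarrow> v \<in> car A \<Longrightarrow> g (mul A u v) = mul C (g u) (g v)"
    using e(1) g unfolding dmon_hom_def by auto
  have k_e: "\<And>u. u \<in> car A \<Longrightarrow> ?k (e u) = g u" using factor_onto_apply[OF _ ker] .
  have "?k (one B) = one C"
    using k_e[OF dmon_one_closed[OF A]] by (simp only: e_one g_one)
  moreover have "?k (mul B x y) = mul C (?k x) (?k y)" if "x \<in> car B" "y \<in> car B" for x y
  proof -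
    from that obtain u v where uv: "u \<in> car A" "v \<in> car A" "x = e u" "y = e v"
      unfolding e(2)[symmetric] by blast
    have "?k (mul B x y) = ?k (e (mul A u v))" by (simp only: uv e_mul)
    also have "\<dots> = g (mul A u v)" using k_e dmon_mul_closed[OF A] uv by blast
    also have "\<dots> = mul C (?k x) (?k y)" by (simp only: uv g_mul k_e)
    finally show ?thesis .
  qed
  moreover have "hom ar A B e" "hom ar A C g" using e(1) g unfolding dmon_hom_def by simp_all
  then have "hom ar B C ?k" by (rule hom_factor_onto[OF dmon_closed_alg[OF A] _ e(2) _ ker])
  ultimately show ?thesis unfolding dmon_hom_def by simp
qed

lemma hom_unique_factor_onto:
  assumes A: "closed_alg ar A" and e: "hom ar A B e" "e ` car A = car B" and g: "hom ar A C g"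
    and ker: "kernel (car A) e \<subseteq> kernel (car A) g"
  shows "\<exists>k. hom ar B C k \<and> (\<forall>u\<in>car A. g u = k (e u))
           \<and> (\<forall>k'. (\<forall>u\<in>car A. g u = k' (e u)) \<longrightarrow> (\<forall>m\<in>car B. k' m = k m))"
proof (intro exI[of _ "\<lambda>m. g (inv_into (car A) e m)"] conjI allI impI ballI)
  show "hom ar B C (\<lambda>m. g (inv_into (car A) e m))" by (rule hom_factor_onto[OF A e g ker])
  show "g u = g (inv_into (car A) e (e u))" if "u \<in> car A" for u
    using factor_onto_apply[OF that ker] by simp
  show "k' m = g (inv_into (car A) e m)" if "\<forall>u\<in>car A. g u = k' (e u)" "m \<in> car B" for k' m
    by (rule eq_on_onto[OF e(2) _ that(2)]) (use that(1) factor_onto_apply[OF _ ker] in simp)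
qed

lemma dmon_hom_unique_factor_onto:
  assumes A: "is_dmon ar Eqs A" and e: "dmon_hom ar A B e" "e ` car A = car B"
    and g: "dmon_hom ar A C g" and ker: "kernel (car A) e \<subseteq> kernel (car A) g"
  shows "\<exists>k. dmon_hom ar B C k \<and> (\<forall>u\<in>car A. g u = k (e u))
           \<and> (\<forall>k'. (\<forall>u\<in>car A. g u = k' (e u)) \<longrightarrow> (\<forall>m\<in>car B. k' m = k m))"
proof (intro exI[of _ "\<lambda>m. g (inv_into (car A) e m)"] conjI allI impI ballI)
  show "dmon_hom ar B C (\<lambda>m. g (inv_into (car A) e m))" by (rule dmon_hom_factor_onto[OF A e g ker])
  show "g u = g (inv_into (car A) e (e u))" if "u \<in> car A" for u
    using factor_onto_apply[OF that ker] by simp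
  show "k' m = g (inv_into (car A) e m)" if "\<forall>u\<in>car A. g u = k' (e u)" "m \<in> car B" for k' m
    by (rule eq_on_onto[OF e(2) _ that(2)]) (use that(1) factor_onto_apply[OF _ ker] in simp)
qed

section \<open>Quotients by congruences\<close>

definition quot_dmon :: "('o, 'a) dmon \<Rightarrow> ('a \<times> 'a) set \<Rightarrow> ('o, 'a set) dmon" where
  "quot_dmon F E =
     \<lparr> car = car F // E,
       ops = (\<lambda>c Cs. E `` {ops F c (map rep_cls Cs)}),
       mul = (\<lambda>C D. E `` {mul F (rep_cls C) (rep_cls D)}),
       one = E `` {one F} \<rparr>"

locale dmon_congruence =
  fixes ar :: "'o \<Rightarrow> nat" and Eqs :: "('o trm \<times> 'o trm) set"
    and F :: "('o, 'a) dmon" and E :: "('a \<times> 'a) set"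
  assumes dmon: "is_dmon ar Eqs F"
    and E_equiv: "equiv (car F) E"
    and ops_cong: "\<And>c us vs. length us = ar c \<Longrightarrow> list_all2 (\<lambda>u v. (u, v) \<in> E) us vs \<Longrightarrow>
                     (ops F c us, ops F c vs) \<in> E"
    and mul_cong: "\<And>u v u' v'. (u, v) \<in> E \<Longrightarrow> (u', v') \<in> E \<Longrightarrow> (mul F u u', mul F v v') \<in> E"
begin

lemma rep_cls_class: "u \<in> car F \<Longrightarrow> (u, rep_cls (E `` {u})) \<in> E"
proof -
  assume "u \<in> car F"
  then have "u \<in> E `` {u}" by (rule equiv_class_self[OF E_equiv])
  then have "rep_cls (E `` {u}) \<in> E `` {u}" unfolding rep_cls_def by (rule someI)
  then show ?thesis by simp
qed

lemma quot_ops_classes: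
  assumes "length us = ar c" "set us \<subseteq> car F"
  shows "ops (quot_dmon F E) c (map (\<lambda>u. E `` {u}) us) = E `` {ops F c us}"
proof -
  have "list_all2 (\<lambda>u v. (u, v) \<in> E) us (map rep_cls (map (\<lambda>u. E `` {u}) us))"
    using assms(2) rep_cls_class by (auto simp: list_all2_map2 list_all2_same)
  then have "(ops F c us, ops F c (map rep_cls (map (\<lambda>u. E `` {u}) us))) \<in> E"
    by (rule ops_cong[OF assms(1)])
  then show ?thesis
    unfolding quot_dmon_def by (simp add: equiv_class_eq[OF E_equiv])
qed

lemma quot_mul_classes:
  assumes "u \<in> car F" "v \<in> car F"
  shows "mul (quot_dmon F E) (E `` {u}) (E `` {v}) = E `` {mul F u v}"
proof -
  have "(mul F u v, mul F (rep_cls (E `` {u})) (rep_cls (E `` {v}))) \<in> E"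
    using mul_cong rep_cls_class assms by blast
  then show ?thesis
    unfolding quot_dmon_def by (simp add: equiv_class_eq[OF E_equiv])
qed

lemma quot_map_dmon_hom: "dmon_hom ar F (quot_dmon F E) (\<lambda>u. E `` {u})"
  unfolding dmon_hom_def hom_def
  using quot_ops_classes quot_mul_classes by (auto simp: quot_dmon_def quotientI)

lemma quot_map_onto: "(\<lambda>u. E `` {u}) ` car F = car (quot_dmon F E)"
  by (auto simp: quot_dmon_def quotient_def)

lemma kernel_quot_map: "kernel (car F) (\<lambda>u. E `` {u}) = E"
  using eq_equiv_class_iff[OF E_equiv] equiv_type[OF E_equiv] unfolding kernel_def by blast

lemma quot_is_dmon: "variety ar Eqs \<Longrightarrow> is_dmon ar Eqs (quot_dmon F E)"
  using is_dmon_hom_image dmon quot_map_dmon_hom quot_map_onto by blast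

lemma quot_map_respects: "\<forall>(u, v)\<in>E. E `` {u} = E `` {v}"
  using equiv_class_eq[OF E_equiv] by blast

lemma quot_universal:
  assumes g: "dmon_hom ar F N g" and resp: "\<forall>(u, v)\<in>E. g u = g v"
  shows "\<exists>k. dmon_hom ar (quot_dmon F E) N k \<and> (\<forall>u\<in>car F. g u = k (E `` {u}))
           \<and> (\<forall>k'. (\<forall>u\<in>car F. g u = k' (E `` {u})) \<longrightarrow> (\<forall>C\<in>car (quot_dmon F E). k' C = k C))"
  by (rule dmon_hom_unique_factor_onto[OF dmon quot_map_dmon_hom quot_map_onto g])
    (unfold kernel_quot_map, use resp equiv_type[OF E_equiv] in \<open>auto simp: kernel_def\<close>)

lemma quot_universal_hom:
  assumes g: "hom ar F B g" and resp: "\<forall>(u, v)\<in>E. g u = g v"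
  shows "\<exists>k. hom ar (quot_dmon F E) B k \<and> (\<forall>u\<in>car F. g u = k (E `` {u}))
           \<and> (\<forall>k'. (\<forall>u\<in>car F. g u = k' (E `` {u})) \<longrightarrow> (\<forall>C\<in>car (quot_dmon F E). k' C = k C))"
proof (rule hom_unique_factor_onto[OF dmon_closed_alg[OF dmon] _ quot_map_onto g])
  show "hom ar F (quot_dmon F E) (\<lambda>u. E `` {u})"
    using quot_map_dmon_hom unfolding dmon_hom_def by blast
qed (unfold kernel_quot_map, use resp equiv_type[OF E_equiv] in \<open>auto simp: kernel_def\<close>)

lemma quot_factor_onto:
  assumes e: "dmon_hom ar F M e" "e ` car F = car M" and ker: "kernel (car F) e \<subseteq> E"
  shows "\<exists>h. dmon_hom ar M (quot_dmon F E) h \<and> h ` car M = car (quot_dmon F E)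
           \<and> (\<forall>u\<in>car F. E `` {u} = h (e u))
           \<and> (\<forall>h'. (\<forall>u\<in>car F. E `` {u} = h' (e u)) \<longrightarrow> (\<forall>m\<in>car M. h' m = h m))"
proof -
  obtain h where h: "dmon_hom ar M (quot_dmon F E) h" "\<forall>u\<in>car F. E `` {u} = h (e u)"
      "\<forall>h'. (\<forall>u\<in>car F. E `` {u} = h' (e u)) \<longrightarrow> (\<forall>m\<in>car M. h' m = h m)"
    using dmon_hom_unique_factor_onto[OF dmon e quot_map_dmon_hom] ker
    unfolding kernel_quot_map by blast
  have "h ` car M = (\<lambda>u. E `` {u}) ` car F"
    unfolding e(2)[symmetric] image_image using h(2) by simp
  then show ?thesis using h quot_map_onto by auto
qed

end

section \<open>The syntactic congruence\<close>

lemma syn_mon_eq_quot_dmon: "syn_mon F L = quot_dmon F (syn_cong F L)"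
  by (simp add: syn_mon_def quot_dmon_def Let_def)

lemma syn_map_eq_class: "syn_map F L = (\<lambda>u. syn_cong F L `` {u})"
  by (simp add: syn_map_def fun_eq_iff)

context
  fixes ar :: "'o \<Rightarrow> nat" and Eqs :: "('o trm \<times> 'o trm) set"
    and F :: "('o, 'a) dmon" and Y :: "('o, 'y) alg" and L :: "'a \<Rightarrow> 'y"
  assumes F: "is_dmon ar Eqs F" and L: "hom ar F Y L"
begin

lemma syn_cong_equiv: "equiv (car F) (syn_cong F L)"
  unfolding equiv_def refl_on_def sym_def trans_def syn_cong_def by auto

lemma syn_cong_imp_eq:
  assumes "(u, v) \<in> syn_cong F L"
  shows "L u = L v"
proof -
  have "u \<in> car F" "v \<in> car F"
    "L (mul F (one F) (mul F u (one F))) = L (mul F (one F) (mul F v (one F)))"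
    using assms dmon_one_closed[OF F] unfolding syn_cong_def by auto
  then show ?thesis using F by (simp add: dmon_one_mul dmon_mul_one)
qed

lemma syn_cong_mul_left:
  assumes uv: "(u, v) \<in> syn_cong F L" and w: "w \<in> car F"
  shows "(mul F w u, mul F w v) \<in> syn_cong F L"
  unfolding syn_cong_def
proof (intro CollectI case_prodI conjI ballI)
  have u: "u \<in> car F" and v: "v \<in> car F"
    and ctx: "\<And>x y. x \<in> car F \<Longrightarrow> y \<in> car F \<Longrightarrow> L (mul F x (mul F u y)) = L (mul F x (mul F v y))"
    using uv unfolding syn_cong_def by auto
  show "mul F w u \<in> car F" "mul F w v \<in> car F" using dmon_mul_closed[OF F] u v w by auto
  fix x y assume xy: "x \<in> car F" "y \<in> car F"
  have "L (mul F (mul F x w) (mul F u y)) = L (mul F (mul F x w) (mul F v y))"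
    using ctx xy w dmon_mul_closed[OF F] by blast
  then show "L (mul F x (mul F (mul F w u) y)) = L (mul F x (mul F (mul F w v) y))"
    using xy u v w by (simp add: dmon_mul_assoc[OF F] dmon_mul_closed[OF F])
qed

lemma syn_cong_mul_right:
  assumes uv: "(u, v) \<in> syn_cong F L" and w: "w \<in> car F"
  shows "(mul F u w, mul F v w) \<in> syn_cong F L"
  unfolding syn_cong_def
proof (intro CollectI case_prodI conjI ballI)
  have u: "u \<in> car F" and v: "v \<in> car F"
    and ctx: "\<And>x y. x \<in> car F \<Longrightarrow> y \<in> car F \<Longrightarrow> L (mul F x (mul F u y)) = L (mul F x (mul F v y))"
    using uv unfolding syn_cong_def by auto
  show "mul F u w \<in> car F" "mul F v w \<in> car F" using dmon_mul_closed[OF F] u v w by auto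
  fix x y assume xy: "x \<in> car F" "y \<in> car F"
  have "L (mul F x (mul F u (mul F w y))) = L (mul F x (mul F v (mul F w y)))"
    using ctx xy w dmon_mul_closed[OF F] by blast
  then show "L (mul F x (mul F (mul F u w) y)) = L (mul F x (mul F (mul F v w) y))"
    using xy u v w by (simp add: dmon_mul_assoc[OF F] dmon_mul_closed[OF F])
qed

lemma syn_cong_mul:
  assumes "(u, v) \<in> syn_cong F L" "(u', v') \<in> syn_cong F L"
  shows "(mul F u u', mul F v v') \<in> syn_cong F L"
proof -
  have "u' \<in> car F" "v \<in> car F" using assms unfolding syn_cong_def by auto
  then have "(mul F u u', mul F v u') \<in> syn_cong F L" "(mul F v u', mul F v v') \<in> syn_cong F L"
    using assms syn_cong_mul_left syn_cong_mul_right by auto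
  then show ?thesis using syn_cong_equiv unfolding equiv_def trans_def by blast
qed

lemma hom_context:
  assumes "x \<in> car F" "y \<in> car F"
  shows "hom ar F Y (\<lambda>u. L (mul F x (mul F u y)))"
  using hom_comp[OF hom_comp[OF dmon_hom_mul_right dmon_hom_mul_left] L] F assms by blast

lemma syn_cong_ops:
  assumes len: "length us = ar c" and rel: "list_all2 (\<lambda>u v. (u, v) \<in> syn_cong F L) us vs"
  shows "(ops F c us, ops F c vs) \<in> syn_cong F L"
proof -
  have sets: "set us \<subseteq> car F" "set vs \<subseteq> car F" and "length vs = ar c"
    using rel len unfolding syn_cong_def by (auto simp: list_all2_conv_all_nth in_set_conv_nth)
  have ops_in: "ops F c us \<in> car F" "ops F c vs \<in> car F"
    using dmon_closed_alg[OF F] sets len \<open>length vs = ar c\<close> unfolding closed_alg_def by auto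
  have "L (mul F x (mul F (ops F c us) y)) = L (mul F x (mul F (ops F c vs) y))"
    if xy: "x \<in> car F" "y \<in> car F" for x y
  proof -
    let ?\<phi> = "\<lambda>u. L (mul F x (mul F u y))"
    have "list_all2 (\<lambda>u v. ?\<phi> u = ?\<phi> v) us vs"
      using rel xy unfolding syn_cong_def by (auto elim: list_all2_mono)
    then have "map ?\<phi> us = map ?\<phi> vs" by (induction rule: list_all2_induct) auto
    then show ?thesis
      using hom_context[OF xy] sets len \<open>length vs = ar c\<close> unfolding hom_def by metis
  qed
  then show ?thesis using ops_in unfolding syn_cong_def by blast
qed

lemma dmon_congruence_syn_cong: "dmon_congruence ar Eqs F (syn_cong F L)"
  by unfold_locales (use F syn_cong_equiv syn_cong_ops syn_cong_mul in auto)

lemma kernel_subset_syn_cong: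
  assumes e: "dmon_hom ar F M e" and Lf: "\<forall>u\<in>car F. L u = f (e u)"
  shows "kernel (car F) e \<subseteq> syn_cong F L"
proof -
  have e_mul: "\<And>x y. x \<in> car F \<Longrightarrow> y \<in> car F \<Longrightarrow> e (mul F x y) = mul M (e x) (e y)"
    using e unfolding dmon_hom_def by blast
  have "L (mul F x (mul F w y)) = f (mul M (e x) (mul M (e w) (e y)))"
    if "x \<in> car F" "y \<in> car F" "w \<in> car F" for x y w
    using that Lf by (simp add: e_mul dmon_mul_closed[OF F])
  then show ?thesis unfolding kernel_def syn_cong_def by auto
qed

interpretation syn: dmon_congruence ar Eqs F "syn_cong F L"
  by (rule dmon_congruence_syn_cong)

lemma syn_mon_is_dmon: "variety ar Eqs \<Longrightarrow> is_dmon ar Eqs (syn_mon F L)"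
  unfolding syn_mon_eq_quot_dmon by (rule syn.quot_is_dmon)

lemma syn_map_dmon_hom: "dmon_hom ar F (syn_mon F L) (syn_map F L)"
  unfolding syn_mon_eq_quot_dmon syn_map_eq_class by (rule syn.quot_map_dmon_hom)

lemma syn_map_onto: "syn_map F L ` car F = car (syn_mon F L)"
  unfolding syn_mon_eq_quot_dmon syn_map_eq_class by (rule syn.quot_map_onto)

lemma syn_map_respects: "\<forall>(u, v)\<in>syn_cong F L. syn_map F L u = syn_map F L v"
  unfolding syn_map_eq_class by (rule syn.quot_map_respects)

lemma syn_mon_universal:
  assumes "dmon_hom ar F N g" "\<forall>(u, v)\<in>syn_cong F L. g u = g v"
  shows "\<exists>k. dmon_hom ar (syn_mon F L) N k \<and> (\<forall>u\<in>car F. g u = k (syn_map F L u))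
           \<and> (\<forall>k'. dmon_hom ar (syn_mon F L) N k' \<and> (\<forall>u\<in>car F. g u = k' (syn_map F L u))
                  \<longrightarrow> (\<forall>C\<in>car (syn_mon F L). k' C = k C))"
  using syn.quot_universal[OF assms] unfolding syn_mon_eq_quot_dmon syn_map_eq_class by blast

lemma syn_mon_recognizes:
  "\<exists>fL. hom ar (syn_mon F L) Y fL \<and> (\<forall>u\<in>car F. L u = fL (syn_map F L u))
      \<and> (\<forall>f'. hom ar (syn_mon F L) Y f' \<and> (\<forall>u\<in>car F. L u = f' (syn_map F L u))
             \<longrightarrow> (\<forall>C\<in>car (syn_mon F L). f' C = fL C))"
proof -
  have "\<forall>(u, v)\<in>syn_cong F L. L u = L v" using syn_cong_imp_eq by blast
  from syn.quot_universal_hom[OF L this] show ?thesis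
    unfolding syn_mon_eq_quot_dmon syn_map_eq_class by blast
qed

lemma syn_mon_minimal:
  assumes fL: "\<forall>u\<in>car F. L u = fL (syn_map F L u)"
    and e: "dmon_hom ar F M e" "e ` car F = car M" and Lf: "\<forall>u\<in>car F. L u = f (e u)"
  shows "\<exists>h. dmon_hom ar M (syn_mon F L) h \<and> h ` car M = car (syn_mon F L)
           \<and> (\<forall>u\<in>car F. syn_map F L u = h (e u)) \<and> (\<forall>m\<in>car M. f m = fL (h m))
           \<and> (\<forall>h'. dmon_hom ar M (syn_mon F L) h' \<and> (\<forall>u\<in>car F. syn_map F L u = h' (e u))
                  \<longrightarrow> (\<forall>m\<in>car M. h' m = h m))"
proof -
  from syn.quot_factor_onto[OF e kernel_subset_syn_cong[OF e(1) Lf]]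
  obtain h where h: "dmon_hom ar M (syn_mon F L) h" "h ` car M = car (syn_mon F L)"
      "\<forall>u\<in>car F. syn_map F L u = h (e u)"
      "\<forall>h'. (\<forall>u\<in>car F. syn_map F L u = h' (e u)) \<longrightarrow> (\<forall>m\<in>car M. h' m = h m)"
    unfolding syn_mon_eq_quot_dmon syn_map_eq_class by (elim exE conjE)
  have "\<forall>m\<in>car M. f m = fL (h m)"
  proof
    show "f m = fL (h m)" if "m \<in> car M" for m
    proof (rule eq_on_onto[OF e(2) _ that])
      show "f (e u) = fL (h (e u))" if "u \<in> car F" for u
        using that Lf fL h(3) by metis
    qed
  qed
  moreover have "\<forall>h'. dmon_hom ar M (syn_mon F L) h' \<and> (\<forall>u\<in>car F. syn_map F L u = h' (e u))
      \<longrightarrow> (\<forall>m\<in>car M. h' m = h m)"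
    using h(4) by blast
  ultimately show ?thesis by (intro exI[of _ h] conjI h(1-3))
qed

end

theorem mainTheorem8:
  fixes ar :: "'o \<Rightarrow> nat" and Eqs :: "('o trm \<times> 'o trm) set"
    and X :: "('o, 'x) alg" and F :: "('o, 'a) dmon" and \<eta> :: "'x \<Rightarrow> 'a"
    and Y :: "('o, 'y) alg" and L :: "'a \<Rightarrow> 'y"
  assumes comm: "comm_variety ar Eqs TYPE('a) TYPE('a)" "comm_variety ar Eqs TYPE('a) TYPE('y)"
      "comm_variety ar Eqs TYPE('a) TYPE('m)" "comm_variety ar Eqs TYPE('m) TYPE('y)"
      "comm_variety ar Eqs TYPE('m) TYPE('m)" "comm_variety ar Eqs TYPE('x) TYPE('a)"
      "comm_variety ar Eqs TYPE('y) TYPE('y)"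
    and free: "free_dmon ar Eqs X F \<eta> TYPE('m)"
    and Y: "in_var ar Eqs Y"
    and L: "hom ar F Y L"
  shows
    "is_dmon ar Eqs (syn_mon F L)
     \<and> dmon_hom ar F (syn_mon F L) (syn_map F L)
     \<and> syn_map F L ` car F = car (syn_mon F L)
     \<and> (\<forall>(u,v)\<in>syn_cong F L. syn_map F L u = syn_map F L v)
     \<and> (\<forall>(N::('o,'m) dmon) g. is_dmon ar Eqs N \<and> dmon_hom ar F N g
            \<and> (\<forall>(u,v)\<in>syn_cong F L. g u = g v) \<longrightarrow>
          (\<exists>k. dmon_hom ar (syn_mon F L) N k \<and> (\<forall>u\<in>car F. g u = k (syn_map F L u))
             \<and> (\<forall>k'. dmon_hom ar (syn_mon F L) N k' \<and> (\<forall>u\<in>car F. g u = k' (syn_map F L u))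
                    \<longrightarrow> (\<forall>C\<in>car (syn_mon F L). k' C = k C))))
     \<and> (\<exists>fL. hom ar (syn_mon F L) Y fL
          \<and> (\<forall>u\<in>car F. L u = fL (syn_map F L u))
          \<and> (\<forall>f'. hom ar (syn_mon F L) Y f' \<and> (\<forall>u\<in>car F. L u = f' (syn_map F L u))
                 \<longrightarrow> (\<forall>C\<in>car (syn_mon F L). f' C = fL C))
          \<and> (\<forall>(M::('o,'m) dmon) e f.
               is_dmon ar Eqs M \<and> dmon_hom ar F M e \<and> e ` car F = car M
               \<and> hom ar M Y f \<and> (\<forall>u\<in>car F. L u = f (e u)) \<longrightarrow>
               (\<exists>h. dmon_hom ar M (syn_mon F L) h \<and> h ` car M = car (syn_mon F L)
                  \<and> (\<forall>u\<in>car F. syn_map F L u = h (e u))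
                  \<and> (\<forall>m\<in>car M. f m = fL (h m))
                  \<and> (\<forall>h'. dmon_hom ar M (syn_mon F L) h' \<and> (\<forall>u\<in>car F. syn_map F L u = h' (e u))
                         \<longrightarrow> (\<forall>m\<in>car M. h' m = h m)))))"
proof -
  have F: "is_dmon ar Eqs F" using free unfolding free_dmon_def by blast
  have var: "variety ar Eqs" using comm(1) unfolding comm_variety_def by blast
  obtain fL where fL: "hom ar (syn_mon F L) Y fL" "\<forall>u\<in>car F. L u = fL (syn_map F L u)"
    "\<forall>f'. hom ar (syn_mon F L) Y f' \<and> (\<forall>u\<in>car F. L u = f' (syn_map F L u))
       \<longrightarrow> (\<forall>C\<in>car (syn_mon F L). f' C = fL C)"
    using syn_mon_recognizes[OF F L] by (elim exE conjE)
  show ?thesis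
    by (intro conjI allI impI exI[of _ fL] fL(1,2) syn_mon_is_dmon[OF F L var]
        syn_map_dmon_hom[OF F L] syn_map_onto[OF F L] syn_map_respects[OF F L]
        syn_mon_universal[OF F L] syn_mon_minimal[OF F L fL(2)])
      (use fL(3) in blast)+
qed

end
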